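(* Let $K$ be a field and let $\Delta$ be a simplicial complex on the vertex set $V\cup V'$, where $V\cap V'=\emptyset$ and $|V|=|V'|=n$. Suppose that the set $G=\{F\in\mathcal F(\Delta): F\cap V\neq\emptyset,\ F\cap V'\neq\emptyset\}$ is a Cohen--Macaulay bipartite graph (with bipartition $V,V'$) with no isolated vertex. Fix a labeling $V=\{x_1,\dots,x_n\}$, $V'=\{y_1,\dots,y_n\}$ and a partial order $\le$ on $V$ such that $\{x_i,y_j\}$ is an edge of $G$ if and only if $x_i\le x_j$, and let $\mathcal L(G)$ be the distributive lattice of all poset ideals of $(V,\le)$. Then the following are equivalent: (1) $\Delta$ is unmixed, and all minimal vertex covers of $\Delta$ have cardinality $|V|$; (2) there exists a segment $\mathcal S\subseteq\mathcal L(G)$ such that $H_{\mathcal S}^*=I(\Delta)$.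
   Context: $\mathcal F(\Delta)$ denotes the set of facets of $\Delta$. A vertex cover of $\Delta$ is a set of vertices meeting every facet; it is minimal if no proper subset is a vertex cover; $\Delta$ is unmixed if all minimal vertex covers have the same cardinality. Identify vertices with variables of $S=K[x_1,\dots,x_n,y_1,\dots,y_n]$. The facet ideal is $I(\Delta)=(\prod_{v\in F}v : F\in\mathcal F(\Delta))$; for a graph $G$, $I(G)$ is its edge ideal (generated by $uv$ for edges $\{u,v\}$), and $G$ is Cohen--Macaulay if $S/I(G)$ is Cohen--Macaulay (for such $G$ a labeling and partial order as in the claim always exist). $\mathcal L(G)$ consists of all poset ideals of $(V,\le)$ (including $\emptyset$), ordered by inclusion. For $\alpha\in\mathcal L(G)$ put $u_\alpha=\prod_{x_i\in\alpha}x_i\prod_{x_i\notin\alpha}y_i$, and for a subset $\mathcal S\subseteq\mathcal L(G)$ let $H_{\mathcal S}$ be the ideal of $S$ generated by $\{u_\alpha:\alpha\in\mathcal S\}$. A subset $\mathcal S$ of a lattice is a segment if for all $p,q\in\mathcal S$ with $p\le q$ the interval $[p,q]=\{r: p\le r\le q\}$ is contained in $\mathcal S$. For a squarefree monomial ideal $I=I_\Gamma$ (Stanley--Reisner ideal of a simplicial complex $\Gamma$ on the vertex set $W=V\cup V'$), $I^*:=I_{\Gamma^\vee}$, where $\Gamma^\vee=\{W\setminus F: F\notin\Gamma\}$ is the Alexander dual. *)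

theory Defs
  imports Main "HOL-Library.Multiset"
begin

definition simplicial_complex :: "'v set \<Rightarrow> 'v set set \<Rightarrow> bool" where
  "simplicial_complex W \<Delta> \<longleftrightarrow> finite W \<and> \<Delta> \<subseteq> Pow W \<and> \<Delta> \<noteq> {} \<and>
     (\<forall>F\<in>\<Delta>. \<forall>G. G \<subseteq> F \<longrightarrow> G \<in> \<Delta>)"

definition facets :: "'v set set \<Rightarrow> 'v set set" where
  "facets \<Delta> = {F \<in> \<Delta>. \<forall>G\<in>\<Delta>. F \<subseteq> G \<longrightarrow> G = F}"

definition vertex_cover :: "'v set \<Rightarrow> 'v set set \<Rightarrow> 'v set \<Rightarrow> bool" where
  "vertex_cover W \<Delta> C \<longleftrightarrow> C \<subseteq> W \<and> (\<forall>F\<in>facets \<Delta>. C \<inter> F \<noteq> {})"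

definition minimal_vertex_cover :: "'v set \<Rightarrow> 'v set set \<Rightarrow> 'v set \<Rightarrow> bool" where
  "minimal_vertex_cover W \<Delta> C \<longleftrightarrow> vertex_cover W \<Delta> C \<and> (\<forall>D. D \<subset> C \<longrightarrow> \<not> vertex_cover W \<Delta> D)"

definition unmixed :: "'v set \<Rightarrow> 'v set set \<Rightarrow> bool" where
  "unmixed W \<Delta> \<longleftrightarrow> (\<forall>C D. minimal_vertex_cover W \<Delta> C \<and> minimal_vertex_cover W \<Delta> D \<longrightarrow> card C = card D)"

text \<open>Monomials in the variables W are modelled as multisets over W (exponent vectors).
  A monomial ideal is represented by the set of monomials it contains (which determines it,
  over any field K).\<close>
definition monomial_ideal :: "'v set \<Rightarrow> 'v multiset set \<Rightarrow> 'v multiset set" where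
  "monomial_ideal W Gs = {m. set_mset m \<subseteq> W \<and> (\<exists>g\<in>Gs. g \<subseteq># m)}"

abbreviation sqf :: "'v set \<Rightarrow> 'v multiset" where
  "sqf F \<equiv> mset_set F"

definition facet_ideal :: "'v set \<Rightarrow> 'v set set \<Rightarrow> 'v multiset set" where
  "facet_ideal W \<Delta> = monomial_ideal W (sqf ` facets \<Delta>)"

definition SR_ideal :: "'v set \<Rightarrow> 'v set set \<Rightarrow> 'v multiset set" where
  "SR_ideal W \<Gamma> = monomial_ideal W {sqf F | F. F \<subseteq> W \<and> F \<notin> \<Gamma>}"

definition SR_complex :: "'v set \<Rightarrow> 'v multiset set \<Rightarrow> 'v set set" where
  "SR_complex W I = {F. F \<subseteq> W \<and> sqf F \<notin> I}"

definition alexander_dual :: "'v set \<Rightarrow> 'v set set \<Rightarrow> 'v set set" where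
  "alexander_dual W \<Gamma> = {W - F | F. F \<subseteq> W \<and> F \<notin> \<Gamma>}"

definition dual_ideal :: "'v set \<Rightarrow> 'v multiset set \<Rightarrow> 'v multiset set" where
  "dual_ideal W I = SR_ideal W (alexander_dual W (SR_complex W I))"

definition poset_ideals :: "'v set \<Rightarrow> 'v rel \<Rightarrow> 'v set set" where
  "poset_ideals V R = {\<alpha>. \<alpha> \<subseteq> V \<and> (\<forall>a\<in>\<alpha>. \<forall>b\<in>V. (b, a) \<in> R \<longrightarrow> b \<in> \<alpha>)}"

definition u_mon :: "nat \<Rightarrow> (nat \<Rightarrow> 'v) \<Rightarrow> (nat \<Rightarrow> 'v) \<Rightarrow> 'v set \<Rightarrow> 'v multiset" where
  "u_mon n x y \<alpha> = sqf ({x i | i. i \<in> {1..n} \<and> x i \<in> \<alpha>} \<union> {y i | i. i \<in> {1..n} \<and> x i \<notin> \<alpha>})"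

definition H_ideal :: "'v set \<Rightarrow> nat \<Rightarrow> (nat \<Rightarrow> 'v) \<Rightarrow> (nat \<Rightarrow> 'v) \<Rightarrow> 'v set set \<Rightarrow> 'v multiset set" where
  "H_ideal W n x y S = monomial_ideal W (u_mon n x y ` S)"

definition segment :: "'v set set \<Rightarrow> 'v set set \<Rightarrow> bool" where
  "segment L S \<longleftrightarrow> S \<subseteq> L \<and> (\<forall>p\<in>S. \<forall>q\<in>S. p \<subseteq> q \<longrightarrow> {r \<in> L. p \<subseteq> r \<and> r \<subseteq> q} \<subseteq> S)"

end

theory Submission
  imports Defs
begin

(* Since the Alexander dual of a squarefree monomial ideal is generated by the transversals of
  its generators, H_S^* = I(\<Delta>) says that the vertex covers of \<Delta> are exactly the sets containing
  the support U(\<alpha>) = {x_i : x_i \<in> \<alpha>} \<union> {y_i : x_i \<notin> \<alpha>} of some u_\<alpha>, \<alpha> \<in> S. Every minimal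
  vertex cover is then some U(\<alpha>), of size n.
  Conversely, let all minimal vertex covers have size n. Since x_i \<le> x_i, each {x_i, y_i} is an
  edge, so a minimal vertex cover contains exactly one of x_i, y_i for every i: it is U(\<alpha>) for its
  trace \<alpha> on V, and the edges {x_i, y_j} with x_i \<le> x_j make \<alpha> a poset ideal. Hence
  S = {\<alpha> \<in> L(G) : U(\<alpha>) is a vertex cover} works, and S is a segment: a facet inside V meets
  U(\<alpha>) where it meets \<alpha>, which grows with \<alpha>; a facet inside V' meets U(\<alpha>) \<inter> V', which shrinks;
  and every edge of G meets U(\<alpha>) when \<alpha> is a poset ideal. *)

lemma mset_set_subset_mset_iff:
  assumes "finite A"
  shows "mset_set A \<subseteq># m \<longleftrightarrow> A \<subseteq> set_mset m"
proof
  assume "mset_set A \<subseteq># m"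
  then show "A \<subseteq> set_mset m" using assms set_mset_mono by fastforce
next
  assume "A \<subseteq> set_mset m"
  then have "mset_set A \<subseteq># mset_set (set_mset m)" by (simp add: subset_imp_msubset_mset_set)
  then show "mset_set A \<subseteq># m" using mset_set_set_mset_msubset subset_mset.order_trans by blast
qed

lemma mem_monomial_ideal_mset_set_iff:
  assumes "finite W" "Gs \<subseteq> Pow W"
  shows "m \<in> monomial_ideal W (mset_set ` Gs) \<longleftrightarrow> set_mset m \<subseteq> W \<and> (\<exists>g\<in>Gs. g \<subseteq> set_mset m)"
proof -
  have "finite g" if "g \<in> Gs" for g using assms that finite_subset by blast
  then show ?thesis unfolding monomial_ideal_def by (auto simp: mset_set_subset_mset_iff)
qed

lemma mem_SR_ideal_iff:
  assumes "finite W"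
  shows "m \<in> SR_ideal W \<Gamma> \<longleftrightarrow> set_mset m \<subseteq> W \<and> (\<exists>F\<subseteq>set_mset m. F \<notin> \<Gamma>)"
proof -
  have SR: "SR_ideal W \<Gamma> = monomial_ideal W (mset_set ` {F. F \<subseteq> W \<and> F \<notin> \<Gamma>})"
    unfolding SR_ideal_def by (simp add: setcompr_eq_image)
  have faces: "{F. F \<subseteq> W \<and> F \<notin> \<Gamma>} \<subseteq> Pow W" by blast
  show ?thesis unfolding SR mem_monomial_ideal_mset_set_iff[OF assms faces] by blast
qed

lemma mem_alexander_dual_iff:
  assumes "F \<subseteq> W"
  shows "F \<in> alexander_dual W \<Gamma> \<longleftrightarrow> W - F \<notin> \<Gamma>"
proof
  assume "W - F \<notin> \<Gamma>"
  moreover have "F = W - (W - F)" using assms by blast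
  ultimately show "F \<in> alexander_dual W \<Gamma>" unfolding alexander_dual_def by blast
qed (auto simp: alexander_dual_def double_diff)

lemma mem_dual_ideal_mset_set_iff:
  assumes W: "finite W" and Gs: "Gs \<subseteq> Pow W"
  shows "m \<in> dual_ideal W (monomial_ideal W (mset_set ` Gs)) \<longleftrightarrow>
    set_mset m \<subseteq> W \<and> (\<forall>g\<in>Gs. g \<inter> set_mset m \<noteq> {})"
proof -
  let ?I = "monomial_ideal W (mset_set ` Gs)"
  have not_dual_face_iff: "F \<notin> alexander_dual W (SR_complex W ?I) \<longleftrightarrow> (\<forall>g\<in>Gs. g \<inter> F \<noteq> {})"
    if F: "F \<subseteq> W" for F
  proof -
    have "finite (W - F)" using W by simp
    then have "F \<notin> alexander_dual W (SR_complex W ?I) \<longleftrightarrow> \<not> (\<exists>g\<in>Gs. g \<subseteq> W - F)"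
      using F by (simp add: mem_alexander_dual_iff SR_complex_def mem_monomial_ideal_mset_set_iff[OF W Gs])
    also have "\<dots> \<longleftrightarrow> (\<forall>g\<in>Gs. g \<inter> F \<noteq> {})"
      using Gs by (auto simp: subset_iff disjoint_iff)
    finally show ?thesis .
  qed
  let ?M = "set_mset m"
  have "(\<exists>F\<subseteq>?M. F \<notin> alexander_dual W (SR_complex W ?I)) \<longleftrightarrow> (\<forall>g\<in>Gs. g \<inter> ?M \<noteq> {})"
    if M: "?M \<subseteq> W"
  proof
    assume "\<exists>F\<subseteq>?M. F \<notin> alexander_dual W (SR_complex W ?I)"
    then obtain F where F: "F \<subseteq> ?M" "F \<notin> alexander_dual W (SR_complex W ?I)" by blast
    then have "\<forall>g\<in>Gs. g \<inter> F \<noteq> {}" using not_dual_face_iff[of F] M by blast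
    then show "\<forall>g\<in>Gs. g \<inter> ?M \<noteq> {}" using F(1) by blast
  qed (use not_dual_face_iff[OF M] in blast)
  then show ?thesis unfolding dual_ideal_def mem_SR_ideal_iff[OF W] by blast
qed

lemma dual_ideal_eq_monomial_ideal_iff:
  assumes W: "finite W" and Gs: "Gs \<subseteq> Pow W" and Fs: "Fs \<subseteq> Pow W"
  shows "dual_ideal W (monomial_ideal W (mset_set ` Gs)) = monomial_ideal W (mset_set ` Fs) \<longleftrightarrow>
    (\<forall>A\<subseteq>W. (\<forall>g\<in>Gs. g \<inter> A \<noteq> {}) \<longleftrightarrow> (\<exists>F\<in>Fs. F \<subseteq> A))"
  (is "?D = ?I \<longleftrightarrow> _")
proof
  assume eq: "?D = ?I"
  show "\<forall>A\<subseteq>W. (\<forall>g\<in>Gs. g \<inter> A \<noteq> {}) \<longleftrightarrow> (\<exists>F\<in>Fs. F \<subseteq> A)"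
  proof (intro allI impI)
    fix A assume A: "A \<subseteq> W"
    then have "finite A" using W finite_subset by blast
    then have "set_mset (mset_set A) = A" by simp
    moreover have "mset_set A \<in> ?D \<longleftrightarrow> mset_set A \<in> ?I" using eq by simp
    ultimately show "(\<forall>g\<in>Gs. g \<inter> A \<noteq> {}) \<longleftrightarrow> (\<exists>F\<in>Fs. F \<subseteq> A)"
      using A by (simp add: mem_dual_ideal_mset_set_iff[OF W Gs] mem_monomial_ideal_mset_set_iff[OF W Fs])
  qed
next
  assume "\<forall>A\<subseteq>W. (\<forall>g\<in>Gs. g \<inter> A \<noteq> {}) \<longleftrightarrow> (\<exists>F\<in>Fs. F \<subseteq> A)"
  then show "?D = ?I"
    by (auto simp: mem_dual_ideal_mset_set_iff[OF W Gs] mem_monomial_ideal_mset_set_iff[OF W Fs])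
qed

lemma dual_ideal_eq_facet_ideal_iff:
  assumes W: "finite W" and Gs: "Gs \<subseteq> Pow W" and facets: "facets \<Delta> \<subseteq> Pow W"
  shows "dual_ideal W (monomial_ideal W (mset_set ` Gs)) = facet_ideal W \<Delta> \<longleftrightarrow>
    (\<forall>C\<subseteq>W. vertex_cover W \<Delta> C \<longleftrightarrow> (\<exists>g\<in>Gs. g \<subseteq> C))"
proof -
  have transversal_iff: "(\<forall>g\<in>Gs. g \<inter> (W - C) \<noteq> {}) \<longleftrightarrow> \<not> (\<exists>g\<in>Gs. g \<subseteq> C)" for C
    using Gs by (auto simp: subset_iff disjoint_iff)
  have contains_facet_iff: "(\<exists>F\<in>facets \<Delta>. F \<subseteq> W - C) \<longleftrightarrow> \<not> vertex_cover W \<Delta> C"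
    if "C \<subseteq> W" for C
    using that facets unfolding vertex_cover_def by (auto simp: subset_iff disjoint_iff)
  have complement: "(\<forall>A\<subseteq>W. P A) \<longleftrightarrow> (\<forall>C\<subseteq>W. P (W - C))" for P
    by (metis Diff_subset double_diff order_refl)
  have "dual_ideal W (monomial_ideal W (mset_set ` Gs)) = facet_ideal W \<Delta> \<longleftrightarrow>
      (\<forall>A\<subseteq>W. (\<forall>g\<in>Gs. g \<inter> A \<noteq> {}) \<longleftrightarrow> (\<exists>F\<in>facets \<Delta>. F \<subseteq> A))"
    unfolding facet_ideal_def by (rule dual_ideal_eq_monomial_ideal_iff[OF W Gs facets])
  also have "\<dots> \<longleftrightarrow>
      (\<forall>C\<subseteq>W. (\<forall>g\<in>Gs. g \<inter> (W - C) \<noteq> {}) \<longleftrightarrow> (\<exists>F\<in>facets \<Delta>. F \<subseteq> W - C))"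
    using complement[of "\<lambda>A. (\<forall>g\<in>Gs. g \<inter> A \<noteq> {}) \<longleftrightarrow> (\<exists>F\<in>facets \<Delta>. F \<subseteq> A)"]
    by simp
  also have "\<dots> \<longleftrightarrow> (\<forall>C\<subseteq>W. vertex_cover W \<Delta> C \<longleftrightarrow> (\<exists>g\<in>Gs. g \<subseteq> C))"
    by (auto simp: transversal_iff contains_facet_iff)
  finally show ?thesis .
qed

lemma minimal_vertex_cover_below:
  assumes "finite C" "vertex_cover W \<Delta> C"
  obtains D where "D \<subseteq> C" "minimal_vertex_cover W \<Delta> D"
  using assms
proof (induction "card C" arbitrary: C rule: less_induct)
  case less
  show ?case
  proof (cases "minimal_vertex_cover W \<Delta> C")
    case False
    then obtain D where D: "D \<subset> C" "vertex_cover W \<Delta> D"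
      using less.prems unfolding minimal_vertex_cover_def by blast
    have "finite D" using D(1) \<open>finite C\<close> by (meson finite_subset psubset_imp_subset)
    moreover have "card D < card C" using D(1) \<open>finite C\<close> psubset_card_mono by blast
    ultimately show ?thesis using less D by (meson order.trans psubset_imp_subset)
  qed (use less.prems in blast)
qed

lemma minimal_vertex_cover_mem_generators:
  assumes covers: "\<forall>C\<subseteq>W. vertex_cover W \<Delta> C \<longleftrightarrow> (\<exists>g\<in>Gs. g \<subseteq> C)" and Gs: "Gs \<subseteq> Pow W"
    and C: "minimal_vertex_cover W \<Delta> C"
  shows "C \<in> Gs"
proof -
  have "C \<subseteq> W" "vertex_cover W \<Delta> C"
    using C unfolding minimal_vertex_cover_def vertex_cover_def by auto
  then obtain g where g: "g \<in> Gs" "g \<subseteq> C" using covers by blast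
  then have "vertex_cover W \<Delta> g" using covers Gs by blast
  then have "g = C" using C g(2) unfolding minimal_vertex_cover_def by blast
  then show ?thesis using g(1) by simp
qed

locale bipartite_poset_complex =
  fixes V V' :: "'v set" and n :: nat and \<Delta> :: "'v set set"
    and x y :: "nat \<Rightarrow> 'v" and R :: "'v rel"
  assumes disjoint: "V \<inter> V' = {}"
    and facets_subset: "facets \<Delta> \<subseteq> Pow (V \<union> V')"
    and mixed_facet_card: "\<forall>F\<in>facets \<Delta>. F \<inter> V \<noteq> {} \<and> F \<inter> V' \<noteq> {} \<longrightarrow> card F = 2"
    and bij_x: "bij_betw x {1..n} V" and bij_y: "bij_betw y {1..n} V'"
    and refl_R: "refl_on V R"
    and edge_iff: "\<forall>i\<in>{1..n}. \<forall>j\<in>{1..n}. {x i, y j} \<in> facets \<Delta> \<longleftrightarrow> (x i, x j) \<in> R"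
begin

definition u_support :: "'v set \<Rightarrow> 'v set" where
  "u_support \<alpha> = (\<lambda>i. if x i \<in> \<alpha> then x i else y i) ` {1..n}"

definition cover_ideals :: "'v set set" where
  "cover_ideals = {\<alpha> \<in> poset_ideals V R. vertex_cover (V \<union> V') \<Delta> (u_support \<alpha>)}"

lemma finite_vertices: "finite (V \<union> V')"
  using bij_x bij_y bij_betw_finite by blast

lemma x_in_V: "i \<in> {1..n} \<Longrightarrow> x i \<in> V"
  using bij_x bij_betwE by blast

lemma y_in_V': "i \<in> {1..n} \<Longrightarrow> y i \<in> V'"
  using bij_y bij_betwE by blast

lemma V_eq_image: "V = x ` {1..n}"
  using bij_x by (simp add: bij_betw_def)

lemma V'_eq_image: "V' = y ` {1..n}"
  using bij_y by (simp add: bij_betw_def)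

lemma x_neq_y: "i \<in> {1..n} \<Longrightarrow> j \<in> {1..n} \<Longrightarrow> x i \<noteq> y j"
  using x_in_V y_in_V' disjoint by (metis disjoint_iff)

lemma x_eq_x_iff: "i \<in> {1..n} \<Longrightarrow> j \<in> {1..n} \<Longrightarrow> x i = x j \<longleftrightarrow> i = j"
  using bij_x by (auto simp: bij_betw_def dest: inj_onD)

lemma y_eq_y_iff: "i \<in> {1..n} \<Longrightarrow> j \<in> {1..n} \<Longrightarrow> y i = y j \<longleftrightarrow> i = j"
  using bij_y by (auto simp: bij_betw_def dest: inj_onD)

lemma diagonal_edge: "i \<in> {1..n} \<Longrightarrow> {x i, y i} \<in> facets \<Delta>"
  using edge_iff refl_R x_in_V by (auto simp: refl_on_def)

lemma card_u_support: "card (u_support \<alpha>) = n"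
proof -
  have "inj_on (\<lambda>i. if x i \<in> \<alpha> then x i else y i) {1..n}"
    by (rule inj_onI) (auto simp: x_eq_x_iff y_eq_y_iff x_neq_y x_neq_y[symmetric] split: if_splits)
  then have "card (u_support \<alpha>) = card {1..n}" unfolding u_support_def by (rule card_image)
  then show ?thesis by simp
qed

lemma u_support_subset: "u_support \<alpha> \<subseteq> V \<union> V'"
  unfolding u_support_def using x_in_V y_in_V' by auto

lemma x_mem_u_support_iff: "i \<in> {1..n} \<Longrightarrow> x i \<in> u_support \<alpha> \<longleftrightarrow> x i \<in> \<alpha>"
  unfolding u_support_def by (force simp: x_eq_x_iff x_neq_y)

lemma y_mem_u_support_iff: "i \<in> {1..n} \<Longrightarrow> y i \<in> u_support \<alpha> \<longleftrightarrow> x i \<notin> \<alpha>"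
  unfolding u_support_def by (force simp: y_eq_y_iff x_neq_y[symmetric])

lemma u_support_Int_V: "u_support \<alpha> \<inter> V = \<alpha> \<inter> V"
  by (auto simp: V_eq_image x_mem_u_support_iff)

lemma u_support_Int_V'_antimono: "\<alpha> \<subseteq> \<beta> \<Longrightarrow> u_support \<beta> \<inter> V' \<subseteq> u_support \<alpha> \<inter> V'"
  by (auto simp: V'_eq_image y_mem_u_support_iff)

lemma H_ideal_eq: "H_ideal (V \<union> V') n x y S = monomial_ideal (V \<union> V') (mset_set ` u_support ` S)"
proof -
  have "u_mon n x y \<alpha> = mset_set (u_support \<alpha>)" for \<alpha>
  proof -
    have "{x i |i. i \<in> {1..n} \<and> x i \<in> \<alpha>} \<union> {y i |i. i \<in> {1..n} \<and> x i \<notin> \<alpha>} = u_support \<alpha>"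
      unfolding u_support_def by auto
    then show ?thesis unfolding u_mon_def by simp
  qed
  then show ?thesis unfolding H_ideal_def by (simp add: image_comp comp_def)
qed

lemma facet_cases:
  assumes F: "F \<in> facets \<Delta>"
  obtains "F \<subseteq> V" | "F \<subseteq> V'" | i j where "i \<in> {1..n}" "j \<in> {1..n}" "F = {x i, y j}" "(x i, x j) \<in> R"
proof (cases "F \<inter> V \<noteq> {} \<and> F \<inter> V' \<noteq> {}")
  case True
  then obtain i j where i: "i \<in> {1..n}" "x i \<in> F" and j: "j \<in> {1..n}" "y j \<in> F"
    unfolding V_eq_image V'_eq_image by blast
  have "finite F" using F facets_subset finite_vertices finite_subset by blast
  moreover have "card F = 2" using mixed_facet_card F True by blast
  moreover have "card {x i, y j} = 2" using x_neq_y[OF i(1) j(1)] by simp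
  ultimately have "F = {x i, y j}" using i(2) j(2) by (metis card_subset_eq empty_subsetI insert_subset)
  then show ?thesis using that(3) i(1) j(1) F edge_iff by blast
next
  case False
  then show ?thesis using that(1,2) F facets_subset by blast
qed

lemma u_support_meets_edge:
  assumes "\<alpha> \<in> poset_ideals V R" "i \<in> {1..n}" "j \<in> {1..n}" "(x i, x j) \<in> R"
  shows "u_support \<alpha> \<inter> {x i, y j} \<noteq> {}"
proof (cases "x j \<in> \<alpha>")
  case True
  then have "x i \<in> \<alpha>" using assms x_in_V unfolding poset_ideals_def by blast
  then show ?thesis using assms(2) by (simp add: x_mem_u_support_iff)
qed (use assms(3) in \<open>simp add: y_mem_u_support_iff\<close>)

lemma vertex_cover_u_support_between:
  assumes "p \<subseteq> r" "r \<subseteq> q" "r \<in> poset_ideals V R"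
    and p: "vertex_cover (V \<union> V') \<Delta> (u_support p)" and q: "vertex_cover (V \<union> V') \<Delta> (u_support q)"
  shows "vertex_cover (V \<union> V') \<Delta> (u_support r)"
  unfolding vertex_cover_def
proof (intro conjI ballI u_support_subset)
  fix F assume F: "F \<in> facets \<Delta>"
  then show "u_support r \<inter> F \<noteq> {}"
  proof (cases rule: facet_cases)
    case 1
    have "u_support p \<inter> V \<subseteq> u_support r \<inter> V" using \<open>p \<subseteq> r\<close> by (auto simp: u_support_Int_V)
    then show ?thesis using p F 1 unfolding vertex_cover_def by blast
  next
    case 2
    have "u_support q \<inter> V' \<subseteq> u_support r \<inter> V'" using \<open>r \<subseteq> q\<close> by (rule u_support_Int_V'_antimono)
    then show ?thesis using q F 2 unfolding vertex_cover_def by blast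
  next
    case 3
    then show ?thesis using u_support_meets_edge \<open>r \<in> poset_ideals V R\<close> by simp
  qed
qed

lemma segment_cover_ideals: "segment (poset_ideals V R) cover_ideals"
  unfolding segment_def cover_ideals_def using vertex_cover_u_support_between by blast

lemma poset_ideal_if_vertex_cover_u_support:
  assumes "\<alpha> \<subseteq> V" and cover: "vertex_cover (V \<union> V') \<Delta> (u_support \<alpha>)"
  shows "\<alpha> \<in> poset_ideals V R"
  unfolding poset_ideals_def
proof (intro CollectI conjI ballI impI \<open>\<alpha> \<subseteq> V\<close>)
  fix a b assume a: "a \<in> \<alpha>" and b: "b \<in> V" and "(b, a) \<in> R"
  obtain i j where i: "i \<in> {1..n}" "b = x i" and j: "j \<in> {1..n}" "a = x j"
    using a b \<open>\<alpha> \<subseteq> V\<close> unfolding V_eq_image by blast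
  have "{x i, y j} \<in> facets \<Delta>" using edge_iff i j \<open>(b, a) \<in> R\<close> by blast
  then have "u_support \<alpha> \<inter> {x i, y j} \<noteq> {}" using cover unfolding vertex_cover_def by blast
  moreover have "y j \<notin> u_support \<alpha>" using a j by (simp add: y_mem_u_support_iff)
  ultimately show "b \<in> \<alpha>" using i by (auto simp: x_mem_u_support_iff)
qed

lemma u_support_eq_if_vertex_cover_card:
  assumes cover: "vertex_cover (V \<union> V') \<Delta> D" and card: "card D = n"
  shows "u_support (D \<inter> V) = D"
proof (rule card_subset_eq)
  show "finite D" using cover finite_vertices finite_subset unfolding vertex_cover_def by blast
  show "u_support (D \<inter> V) \<subseteq> D"
  proof
    fix v assume "v \<in> u_support (D \<inter> V)"
    then obtain i where i: "i \<in> {1..n}" "v = (if x i \<in> D \<inter> V then x i else y i)"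
      unfolding u_support_def by blast
    have "D \<inter> {x i, y i} \<noteq> {}" using cover diagonal_edge[OF i(1)] unfolding vertex_cover_def by blast
    then show "v \<in> D" using i x_in_V by auto
  qed
  show "card (u_support (D \<inter> V)) = card D" using card card_u_support by simp
qed

lemma vertex_cover_iff_superset_u_support:
  assumes all_card: "\<forall>C. minimal_vertex_cover (V \<union> V') \<Delta> C \<longrightarrow> card C = n"
    and C: "C \<subseteq> V \<union> V'"
  shows "vertex_cover (V \<union> V') \<Delta> C \<longleftrightarrow> (\<exists>\<alpha>\<in>cover_ideals. u_support \<alpha> \<subseteq> C)"
proof
  assume cover: "vertex_cover (V \<union> V') \<Delta> C"
  have "finite C" using C finite_vertices finite_subset by blast
  then obtain D where D: "D \<subseteq> C" "minimal_vertex_cover (V \<union> V') \<Delta> D"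
    using cover by (rule minimal_vertex_cover_below)
  have D_cover: "vertex_cover (V \<union> V') \<Delta> D" using D(2) unfolding minimal_vertex_cover_def by blast
  have "card D = n" using all_card D(2) by blast
  then have D_eq: "u_support (D \<inter> V) = D" by (rule u_support_eq_if_vertex_cover_card[OF D_cover])
  then have "D \<inter> V \<in> poset_ideals V R"
    using D_cover by (intro poset_ideal_if_vertex_cover_u_support) simp_all
  then have "D \<inter> V \<in> cover_ideals" unfolding cover_ideals_def using D_eq D_cover by simp
  then show "\<exists>\<alpha>\<in>cover_ideals. u_support \<alpha> \<subseteq> C" using D_eq D(1) by auto
next
  assume "\<exists>\<alpha>\<in>cover_ideals. u_support \<alpha> \<subseteq> C"
  then obtain \<alpha> where "vertex_cover (V \<union> V') \<Delta> (u_support \<alpha>)" "u_support \<alpha> \<subseteq> C"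
    unfolding cover_ideals_def by blast
  then show "vertex_cover (V \<union> V') \<Delta> C" using C unfolding vertex_cover_def by blast
qed

lemma minimal_vertex_covers_card_iff_segment:
  "(\<forall>C. minimal_vertex_cover (V \<union> V') \<Delta> C \<longrightarrow> card C = n) \<longleftrightarrow>
    (\<exists>S. segment (poset_ideals V R) S \<and>
      dual_ideal (V \<union> V') (H_ideal (V \<union> V') n x y S) = facet_ideal (V \<union> V') \<Delta>)"
proof -
  have dual_iff: "dual_ideal (V \<union> V') (H_ideal (V \<union> V') n x y S) = facet_ideal (V \<union> V') \<Delta> \<longleftrightarrow>
      (\<forall>C\<subseteq>V \<union> V'. vertex_cover (V \<union> V') \<Delta> C \<longleftrightarrow> (\<exists>g\<in>u_support ` S. g \<subseteq> C))" for S
    unfolding H_ideal_eq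
    by (rule dual_ideal_eq_facet_ideal_iff[OF finite_vertices _ facets_subset]) (use u_support_subset in blast)
  show ?thesis
    unfolding dual_iff
  proof
    assume "\<forall>C. minimal_vertex_cover (V \<union> V') \<Delta> C \<longrightarrow> card C = n"
    then have "\<forall>C\<subseteq>V \<union> V'. vertex_cover (V \<union> V') \<Delta> C \<longleftrightarrow> (\<exists>g\<in>u_support ` cover_ideals. g \<subseteq> C)"
      by (simp add: vertex_cover_iff_superset_u_support)
    then show "\<exists>S. segment (poset_ideals V R) S \<and>
        (\<forall>C\<subseteq>V \<union> V'. vertex_cover (V \<union> V') \<Delta> C \<longleftrightarrow> (\<exists>g\<in>u_support ` S. g \<subseteq> C))"
      using segment_cover_ideals by blast
  next
    assume "\<exists>S. segment (poset_ideals V R) S \<and>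
        (\<forall>C\<subseteq>V \<union> V'. vertex_cover (V \<union> V') \<Delta> C \<longleftrightarrow> (\<exists>g\<in>u_support ` S. g \<subseteq> C))"
    then obtain S
      where covers: "\<forall>C\<subseteq>V \<union> V'. vertex_cover (V \<union> V') \<Delta> C \<longleftrightarrow> (\<exists>g\<in>u_support ` S. g \<subseteq> C)"
      by blast
    have "u_support ` S \<subseteq> Pow (V \<union> V')" using u_support_subset by blast
    then show "\<forall>C. minimal_vertex_cover (V \<union> V') \<Delta> C \<longrightarrow> card C = n"
      using minimal_vertex_cover_mem_generators[OF covers] card_u_support by blast
  qed
qed

end

lemma bipartite_poset_complexI:
  assumes "V \<inter> V' = {}" and "simplicial_complex (V \<union> V') \<Delta>"
    and "\<forall>F\<in>facets \<Delta>. F \<inter> V \<noteq> {} \<and> F \<inter> V' \<noteq> {} \<longrightarrow> card F = 2"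
    and bij_x: "bij_betw x {1..n} V" and bij_y: "bij_betw y {1..n} V'"
    and "partial_order_on V R"
    and edges: "\<forall>i\<in>{1..n}. \<forall>j\<in>{1..n}.
        ({x i, y j} \<in> facets \<Delta> \<and> {x i, y j} \<inter> V \<noteq> {} \<and> {x i, y j} \<inter> V' \<noteq> {})
          \<longleftrightarrow> (x i, x j) \<in> R"
  shows "bipartite_poset_complex V V' n \<Delta> x y R"
proof
  show "facets \<Delta> \<subseteq> Pow (V \<union> V')"
    using \<open>simplicial_complex (V \<union> V') \<Delta>\<close> unfolding simplicial_complex_def facets_def by auto
  show "refl_on V R"
    using \<open>partial_order_on V R\<close> unfolding partial_order_on_def preorder_on_def by blast
  show "\<forall>i\<in>{1..n}. \<forall>j\<in>{1..n}. {x i, y j} \<in> facets \<Delta> \<longleftrightarrow> (x i, x j) \<in> R"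
  proof (intro ballI)
    fix i j assume "i \<in> {1..n}" "j \<in> {1..n}"
    then have "x i \<in> V" "y j \<in> V'" using bij_x bij_y bij_betwE by blast+
    then show "{x i, y j} \<in> facets \<Delta> \<longleftrightarrow> (x i, x j) \<in> R"
      using edges \<open>i \<in> {1..n}\<close> \<open>j \<in> {1..n}\<close> by blast
  qed
qed (fact assms)+

theorem theorem2p4:
  fixes V V' :: "'v set" and n :: nat and \<Delta> :: "'v set set"
    and x y :: "nat \<Rightarrow> 'v" and R :: "'v rel"
  assumes fin: "finite V" "finite V'"
    and disj: "V \<inter> V' = {}"
    and cardV: "card V = n" and cardV': "card V' = n"
    and cx: "simplicial_complex (V \<union> V') \<Delta>"
    and G_graph: "\<forall>F\<in>facets \<Delta>. F \<inter> V \<noteq> {} \<and> F \<inter> V' \<noteq> {} \<longrightarrow> card F = 2"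
    and no_isolated: "\<forall>v\<in>V \<union> V'. \<exists>F\<in>facets \<Delta>. F \<inter> V \<noteq> {} \<and> F \<inter> V' \<noteq> {} \<and> v \<in> F"
    and lab_x: "bij_betw x {1..n} V" and lab_y: "bij_betw y {1..n} V'"
    and po: "partial_order_on V R"
    and edges: "\<forall>i\<in>{1..n}. \<forall>j\<in>{1..n}.
        ({x i, y j} \<in> facets \<Delta> \<and> {x i, y j} \<inter> V \<noteq> {} \<and> {x i, y j} \<inter> V' \<noteq> {})
          \<longleftrightarrow> (x i, x j) \<in> R"
  shows "(unmixed (V \<union> V') \<Delta> \<and>
           (\<forall>C. minimal_vertex_cover (V \<union> V') \<Delta> C \<longrightarrow> card C = card V))
         \<longleftrightarrow>
         (\<exists>S. segment (poset_ideals V R) S \<and>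
              dual_ideal (V \<union> V') (H_ideal (V \<union> V') n x y S) = facet_ideal (V \<union> V') \<Delta>)"
proof -
  interpret bipartite_poset_complex V V' n \<Delta> x y R
    using disj cx G_graph lab_x lab_y po edges by (rule bipartite_poset_complexI)
  have "unmixed (V \<union> V') \<Delta>" if "\<forall>C. minimal_vertex_cover (V \<union> V') \<Delta> C \<longrightarrow> card C = n"
    using that unfolding unmixed_def by simp
  then show ?thesis
    unfolding cardV using minimal_vertex_covers_card_iff_segment by blast
qed

end
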